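(* Consider the remote-attestation Stackelberg game described in the context with device classes $\mathcal{E}_1,\dots,\mathcal{E}_n$ partitioning $\mathcal{D}$ and a single attestation method $m$. For each class $\mathcal{E}_i$, let $\vec p^*_i$ be an optimal attestation strategy for the game restricted to the devices of $\mathcal{E}_i$, given as follows: for $\delta\in\mathcal{E}_i$ let $\overline{\tau}_\delta=\frac{1}{\mu^m}\cdot\frac{C_A^\delta-G_A^\delta}{L_A^\delta-G_A^\delta}$ and $\tau_\delta=\frac{1}{\mu^m}\cdot\frac{C_A^{\mathcal{E}_i}+C_A^\delta-G_A^\delta}{L_A^\delta-G_A^\delta}$; let $(p^{\mathrm{ND}})_\delta^m=0$ if $C_D^m\ge(G_D^\delta-L_D^\delta)\mu^m$ and $\overline{\tau}_\delta\ge L_D^\delta/(-C_D^m)$, and $(p^{\mathrm{ND}})_\delta^m=\overline{\tau}_\delta$ otherwise; let $a^*_\delta=1$ if $(p^{\mathrm{ND}})_\delta^m<\overline{\tau}_\delta$ and $0$ otherwise; let $\vec p^{\mathrm{D}}=\operatorname{argmin}_{\{\vec p:\ U_A^{(i)}(\vec p,\vec 1)\le0\ \wedge\ \forall\delta\in\mathcal{E}_i\,(p_\delta^m\in[0,\tau_\delta])\}}\sum_{\delta\in\mathcal{E}_i}C_D^m p_\delta^m$; and the optimal strategy set for the restricted game is $\{\vec p^{\mathrm{ND}}\}$ if $U_D^{(i)}(\vec p^{\mathrm{ND}},\vec a^* )>U_D^{(i)}(\vec p^{\mathrm{D}},\vec 0)$, $\{\vec p^{\mathrm{ND}},\vec p^{\mathrm{D}}\}$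 if these are equal, and $\{\vec p^{\mathrm{D}}\}$ otherwise, where $U_A^{(i)},U_D^{(i)}$ denote the utilities of the game restricted to $\mathcal{E}_i$. Then $\langle\vec p^*_1,\vec p^*_2,\dots,\vec p^*_n\rangle$ is an optimal attestation strategy for the full game.
   Context: Remote-attestation game: there is a finite set $\mathcal{D}$ of devices partitioned into pairwise disjoint device classes $\mathcal{E}_1,\dots,\mathcal{E}_n$, and a finite set $\mathcal{M}$ of attestation methods. Constants: for each method $m$, a detection probability $\mu^m$ and a defender cost $C_D^m$; for each device $\delta$, an attacker cost $C_A^\delta$; for each class $\mathcal{E}$, an attacker exploit-development cost $C_A^{\mathcal{E}}$; for each device $\delta$, defender gain $G_D^\delta$ and loss $L_D^\delta$, attacker gain $G_A^\delta$ and loss $L_A^\delta$ (losses are negative values), with $G_D^\delta=-L_A^\delta$ and $L_D^\delta=-G_A^\delta$. The defender chooses $\vec p=\langle p_\delta^m\rangle\in[0,1]^{|\mathcal{D}\times\mathcal{M}|}$; the attacker chooses $\vec a\in\{0,1\}^{|\mathcal{D}|}$. $P_\delta(\vec p)=1-\prod_m(1-\mu^m p_\delta^m)$; $C_D^T(\vec p)=\sum_\delta\sum_m C_D^m p_\delta^m$; $U_D(\vec p,\vec a)=\sum_\delta[G_D^\delta P_\delta(\vec p)+L_D^\delta(1-P_\delta(\vec p))]a_\delta-C_D^T(\vec p)$; $C_A^T(\vec a)=\sum_{\mathcal{E}}\big(C_A^{\mathcal{E}}1_{\{\exists\delta\in\mathcal{E}:a_\delta=1\}}+\sum_{\delta\in\mathcal{E}}C_A^\delta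 a_\delta\big)$; $U_A(\vec p,\vec a)=\sum_\delta[L_A^\delta P_\delta(\vec p)+G_A^\delta(1-P_\delta(\vec p))]a_\delta-C_A^T(\vec a)$. Attacker best response: $\mathcal{F}_A(\vec p)=\operatorname{argmax}_{\vec a}U_A(\vec p,\vec a)$. Defender's optimal strategy: $\vec p^*=\operatorname{argmax}_{\vec p,\ \vec a\in\mathcal{F}_A(\vec p)}U_D(\vec p,\vec a)$ (ties in the attacker's best response broken in favor of the defender). The game restricted to a class $\mathcal{E}_i$ is the same game with device set $\mathcal{E}_i$ (and that single class); $\vec 0,\vec 1$ are the all-zeros and all-ones attack vectors. *)

theory Defs
  imports Complex_Main
begin

record ('d,'m) ra_params =
  mu    :: "'m \<Rightarrow> real"
  CD    :: "'m \<Rightarrow> real"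
  CAdev :: "'d \<Rightarrow> real"
  GD    :: "'d \<Rightarrow> real"
  LD    :: "'d \<Rightarrow> real"
  GA    :: "'d \<Rightarrow> real"
  LA    :: "'d \<Rightarrow> real"

definition devices :: "nat set \<Rightarrow> (nat \<Rightarrow> 'd set) \<Rightarrow> 'd set" where
  "devices I E = (\<Union>i\<in>I. E i)"

definition Pdet :: "('d,'m) ra_params \<Rightarrow> 'm set \<Rightarrow> ('d \<Rightarrow> 'm \<Rightarrow> real) \<Rightarrow> 'd \<Rightarrow> real" where
  "Pdet g M p \<delta> = 1 - (\<Prod>m\<in>M. 1 - mu g m * p \<delta> m)"

definition ind :: "bool \<Rightarrow> real" where
  "ind b = (if b then 1 else 0)"

definition CDT :: "('d,'m) ra_params \<Rightarrow> 'd set \<Rightarrow> 'm set \<Rightarrow> ('d \<Rightarrow> 'm \<Rightarrow> real) \<Rightarrow> real" where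
  "CDT g D M p = (\<Sum>\<delta>\<in>D. \<Sum>m\<in>M. CD g m * p \<delta> m)"

definition UD :: "('d,'m) ra_params \<Rightarrow> nat set \<Rightarrow> (nat \<Rightarrow> 'd set) \<Rightarrow> 'm set
    \<Rightarrow> ('d \<Rightarrow> 'm \<Rightarrow> real) \<Rightarrow> ('d \<Rightarrow> bool) \<Rightarrow> real" where
  "UD g I E M p a =
     (\<Sum>\<delta>\<in>devices I E. (GD g \<delta> * Pdet g M p \<delta> + LD g \<delta> * (1 - Pdet g M p \<delta>)) * ind (a \<delta>))
     - CDT g (devices I E) M p"

definition CAT :: "('d,'m) ra_params \<Rightarrow> nat set \<Rightarrow> (nat \<Rightarrow> 'd set) \<Rightarrow> (nat \<Rightarrow> real)
    \<Rightarrow> ('d \<Rightarrow> bool) \<Rightarrow> real" where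
  "CAT g I E CAE a =
     (\<Sum>i\<in>I. CAE i * ind (\<exists>\<delta>\<in>E i. a \<delta>) + (\<Sum>\<delta>\<in>E i. CAdev g \<delta> * ind (a \<delta>)))"

definition UA :: "('d,'m) ra_params \<Rightarrow> nat set \<Rightarrow> (nat \<Rightarrow> 'd set) \<Rightarrow> (nat \<Rightarrow> real) \<Rightarrow> 'm set
    \<Rightarrow> ('d \<Rightarrow> 'm \<Rightarrow> real) \<Rightarrow> ('d \<Rightarrow> bool) \<Rightarrow> real" where
  "UA g I E CAE M p a =
     (\<Sum>\<delta>\<in>devices I E. (LA g \<delta> * Pdet g M p \<delta> + GA g \<delta> * (1 - Pdet g M p \<delta>)) * ind (a \<delta>))
     - CAT g I E CAE a"

definition def_strats :: "'d set \<Rightarrow> 'm set \<Rightarrow> ('d \<Rightarrow> 'm \<Rightarrow> real) set" where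
  "def_strats D M = {p. (\<forall>\<delta>\<in>D. \<forall>m\<in>M. 0 \<le> p \<delta> m \<and> p \<delta> m \<le> 1)
                       \<and> (\<forall>\<delta> m. \<delta> \<notin> D \<or> m \<notin> M \<longrightarrow> p \<delta> m = 0)}"

definition att_strats :: "'d set \<Rightarrow> ('d \<Rightarrow> bool) set" where
  "att_strats D = {a. \<forall>\<delta>. \<delta> \<notin> D \<longrightarrow> \<not> a \<delta>}"

definition best_resp :: "('d,'m) ra_params \<Rightarrow> nat set \<Rightarrow> (nat \<Rightarrow> 'd set) \<Rightarrow> (nat \<Rightarrow> real) \<Rightarrow> 'm set
    \<Rightarrow> ('d \<Rightarrow> 'm \<Rightarrow> real) \<Rightarrow> ('d \<Rightarrow> bool) set" where
  "best_resp g I E CAE M p =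
     {a \<in> att_strats (devices I E). \<forall>a'\<in>att_strats (devices I E). UA g I E CAE M p a' \<le> UA g I E CAE M p a}"

text \<open>Optimal defender strategy: p is the first component of a maximiser of U_D over pairs (p,a)
  with a in F_A(p) (ties broken in favour of the defender).\<close>
definition optimal :: "('d,'m) ra_params \<Rightarrow> nat set \<Rightarrow> (nat \<Rightarrow> 'd set) \<Rightarrow> (nat \<Rightarrow> real) \<Rightarrow> 'm set
    \<Rightarrow> ('d \<Rightarrow> 'm \<Rightarrow> real) \<Rightarrow> bool" where
  "optimal g I E CAE M p \<longleftrightarrow>
     p \<in> def_strats (devices I E) M \<and>
     (\<exists>a\<in>best_resp g I E CAE M p.
        \<forall>p'\<in>def_strats (devices I E) M. \<forall>a'\<in>best_resp g I E CAE M p'.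
           UD g I E M p' a' \<le> UD g I E M p a)"

definition combine :: "nat set \<Rightarrow> (nat \<Rightarrow> 'd set) \<Rightarrow> 'm set \<Rightarrow> (nat \<Rightarrow> 'd \<Rightarrow> 'm \<Rightarrow> real)
    \<Rightarrow> 'd \<Rightarrow> 'm \<Rightarrow> real" where
  "combine I E M ps = (\<lambda>\<delta> m. \<Sum>i\<in>I. if \<delta> \<in> E i \<and> m \<in> M then ps i \<delta> m else 0)"

end

theory Submission
  imports Defs
begin

text \<open>Both utilities are sums over the device classes of the utilities of the games restricted
  to the classes, and the class-i summand depends only on the strategy components on class i.
  Hence the attacker best-responds in the full game iff she best-responds on every class, and
  the defender's objective over such pairs is maximised classwise. Nothing about the number of
  methods or the closed form of the per-class optima is needed.\<close>

definition restrict_attack :: "(nat \<Rightarrow> 'd set) \<Rightarrow> nat \<Rightarrow> ('d \<Rightarrow> bool) \<Rightarrow> 'd \<Rightarrow> bool" where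
  "restrict_attack E i a = (\<lambda>\<delta>. \<delta> \<in> E i \<and> a \<delta>)"

definition glue_attacks :: "nat set \<Rightarrow> (nat \<Rightarrow> 'd set) \<Rightarrow> (nat \<Rightarrow> 'd \<Rightarrow> bool) \<Rightarrow> 'd \<Rightarrow> bool" where
  "glue_attacks I E A = (\<lambda>\<delta>. \<exists>i\<in>I. \<delta> \<in> E i \<and> A i \<delta>)"

definition restrict_strategy :: "(nat \<Rightarrow> 'd set) \<Rightarrow> nat \<Rightarrow> 'm set \<Rightarrow> ('d \<Rightarrow> 'm \<Rightarrow> real)
    \<Rightarrow> 'd \<Rightarrow> 'm \<Rightarrow> real" where
  "restrict_strategy E i M p = (\<lambda>\<delta> m. if \<delta> \<in> E i \<and> m \<in> M then p \<delta> m else 0)"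

lemma devices_singleton [simp]: "devices {i} E = E i"
  by (simp add: devices_def)

lemma best_resp_subset_att_strats: "best_resp g I E CAE M p \<subseteq> att_strats (devices I E)"
  by (simp add: best_resp_def)

lemma restrict_attack_in_att_strats: "restrict_attack E i a \<in> att_strats (E i)"
  by (simp add: restrict_attack_def att_strats_def)

lemma UA_class_cong:
  assumes "\<forall>\<delta>\<in>E i. \<forall>m\<in>M. p \<delta> m = p' \<delta> m" and "\<forall>\<delta>\<in>E i. a \<delta> = a' \<delta>"
  shows "UA g {i} E CAE M p a = UA g {i} E CAE M p' a'"
proof -
  have "\<forall>\<delta>\<in>E i. Pdet g M p \<delta> = Pdet g M p' \<delta>"
    using assms(1) by (simp add: Pdet_def)
  moreover have "(\<exists>\<delta>\<in>E i. a \<delta>) = (\<exists>\<delta>\<in>E i. a' \<delta>)"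
    using assms(2) by auto
  ultimately show ?thesis
    using assms(2) by (simp add: UA_def CAT_def cong: sum.cong)
qed

lemma UD_class_cong:
  assumes "\<forall>\<delta>\<in>E i. \<forall>m\<in>M. p \<delta> m = p' \<delta> m" and "\<forall>\<delta>\<in>E i. a \<delta> = a' \<delta>"
  shows "UD g {i} E M p a = UD g {i} E M p' a'"
proof -
  have "\<forall>\<delta>\<in>E i. Pdet g M p \<delta> = Pdet g M p' \<delta>"
    using assms(1) by (simp add: Pdet_def)
  then show ?thesis
    using assms by (simp add: UD_def CDT_def cong: sum.cong)
qed

lemma best_resp_class_cong:
  assumes "\<forall>\<delta>\<in>E i. \<forall>m\<in>M. p \<delta> m = p' \<delta> m"
  shows "best_resp g {i} E CAE M p = best_resp g {i} E CAE M p'"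
proof -
  have "UA g {i} E CAE M p a = UA g {i} E CAE M p' a" for a
    by (rule UA_class_cong) (use assms in auto)
  then show ?thesis
    by (simp add: best_resp_def)
qed

lemma restrict_strategy_in_def_strats:
  assumes "p \<in> def_strats (devices I E) M" and "i \<in> I"
  shows "restrict_strategy E i M p \<in> def_strats (E i) M"
  using assms by (auto simp: def_strats_def restrict_strategy_def devices_def)

locale disjoint_classes =
  fixes I :: "nat set" and E :: "nat \<Rightarrow> 'd set"
  assumes finite_index: "finite I"
    and finite_devices: "finite (devices I E)"
    and disjoint: "\<forall>i\<in>I. \<forall>j\<in>I. i \<noteq> j \<longrightarrow> E i \<inter> E j = {}"
begin

lemma class_unique: "i \<in> I \<Longrightarrow> j \<in> I \<Longrightarrow> \<delta> \<in> E i \<Longrightarrow> \<delta> \<in> E j \<Longrightarrow> i = j"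
  using disjoint by blast

lemma sum_devices_eq_sum_classes:
  "(\<Sum>\<delta>\<in>devices I E. f \<delta>) = (\<Sum>i\<in>I. \<Sum>\<delta>\<in>E i. f \<delta>)"
proof -
  have "\<forall>i\<in>I. finite (E i)"
    using finite_devices by (auto simp: devices_def intro: finite_subset)
  then show ?thesis
    unfolding devices_def by (rule sum.UNION_disjoint[OF finite_index _ disjoint])
qed

lemma UA_eq_sum_classes: "UA g I E CAE M p a = (\<Sum>i\<in>I. UA g {i} E CAE M p a)"
  by (simp add: UA_def CAT_def sum_devices_eq_sum_classes sum_subtractf)

lemma UD_eq_sum_classes: "UD g I E M p a = (\<Sum>i\<in>I. UD g {i} E M p a)"
  by (simp add: UD_def CDT_def sum_devices_eq_sum_classes sum_subtractf)

lemma UA_class_restrict_attack: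
  "i \<in> I \<Longrightarrow> UA g {i} E CAE M p (restrict_attack E i a) = UA g {i} E CAE M p a"
  by (rule UA_class_cong) (auto simp: restrict_attack_def)

lemma best_resp_iff_classwise:
  "a \<in> best_resp g I E CAE M p \<longleftrightarrow>
     a \<in> att_strats (devices I E) \<and>
     (\<forall>i\<in>I. restrict_attack E i a \<in> best_resp g {i} E CAE M p)"
proof (intro iffI conjI ballI)
  assume a: "a \<in> best_resp g I E CAE M p"
  then show "a \<in> att_strats (devices I E)"
    by (simp add: best_resp_def)
  fix i assume i: "i \<in> I"
  have "UA g {i} E CAE M p b \<le> UA g {i} E CAE M p a" if b: "b \<in> att_strats (E i)" for b
  proof (rule ccontr)
    assume "\<not> ?thesis"
    then have better: "UA g {i} E CAE M p a < UA g {i} E CAE M p b" by simp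
    define a' where "a' = (\<lambda>\<delta>. if \<delta> \<in> E i then b \<delta> else a \<delta>)"
    have a'_on_i: "UA g {i} E CAE M p a' = UA g {i} E CAE M p b"
      by (rule UA_class_cong) (auto simp: a'_def)
    have a'_off_i: "UA g {j} E CAE M p a' = UA g {j} E CAE M p a" if "j \<in> I" "j \<noteq> i" for j
      by (rule UA_class_cong) (use class_unique[OF i \<open>j \<in> I\<close>] that in \<open>auto simp: a'_def\<close>)
    have "UA g {j} E CAE M p a \<le> UA g {j} E CAE M p a'" if "j \<in> I" for j
      using better a'_on_i a'_off_i[OF that] by (cases "j = i") auto
    then have "UA g I E CAE M p a < UA g I E CAE M p a'"
      unfolding UA_eq_sum_classes
      by (intro sum_strict_mono_ex1[OF finite_index] ballI bexI[OF _ i]) (simp_all add: better a'_on_i)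
    moreover have "a' \<in> att_strats (devices I E)"
      using a b i by (auto simp: a'_def best_resp_def att_strats_def devices_def)
    ultimately show False
      using a by (auto simp: best_resp_def not_le)
  qed
  then show "restrict_attack E i a \<in> best_resp g {i} E CAE M p"
    using i by (simp add: best_resp_def restrict_attack_in_att_strats UA_class_restrict_attack)
next
  assume a: "a \<in> att_strats (devices I E) \<and>
    (\<forall>i\<in>I. restrict_attack E i a \<in> best_resp g {i} E CAE M p)"
  have "UA g I E CAE M p a' \<le> UA g I E CAE M p a" for a'
  proof -
    have "UA g {i} E CAE M p a' \<le> UA g {i} E CAE M p a" if i: "i \<in> I" for i
    proof -
      have "UA g {i} E CAE M p (restrict_attack E i a')
              \<le> UA g {i} E CAE M p (restrict_attack E i a)"
        using a i restrict_attack_in_att_strats[of E i a']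
        unfolding best_resp_def devices_singleton by blast
      then show ?thesis
        by (simp add: UA_class_restrict_attack[OF i])
    qed
    then show ?thesis
      unfolding UA_eq_sum_classes by (rule sum_mono)
  qed
  then show "a \<in> best_resp g I E CAE M p"
    using a by (simp add: best_resp_def)
qed

lemma combine_eq_on_class:
  assumes "i \<in> I" "\<delta> \<in> E i" "m \<in> M"
  shows "combine I E M ps \<delta> m = ps i \<delta> m"
proof -
  have "combine I E M ps \<delta> m = (\<Sum>j\<in>I. if j = i then ps i \<delta> m else 0)"
    unfolding combine_def by (rule sum.cong) (use assms class_unique in auto)
  then show ?thesis
    using assms(1) finite_index by simp
qed

lemma combine_in_def_strats:
  assumes "\<forall>i\<in>I. ps i \<in> def_strats (E i) M"
  shows "combine I E M ps \<in> def_strats (devices I E) M"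
proof -
  have "0 \<le> combine I E M ps \<delta> m \<and> combine I E M ps \<delta> m \<le> 1"
    if "\<delta> \<in> devices I E" "m \<in> M" for \<delta> m
  proof -
    obtain i where "i \<in> I" "\<delta> \<in> E i"
      using \<open>\<delta> \<in> devices I E\<close> by (auto simp: devices_def)
    then show ?thesis
      using assms \<open>m \<in> M\<close> by (simp add: combine_eq_on_class def_strats_def)
  qed
  moreover have "combine I E M ps \<delta> m = 0" if "\<delta> \<notin> devices I E \<or> m \<notin> M" for \<delta> m
    using that by (auto simp: combine_def devices_def intro: sum.neutral)
  ultimately show ?thesis
    by (simp add: def_strats_def)
qed

lemma restrict_glue_attacks:
  assumes "i \<in> I" and "\<forall>j\<in>I. A j \<in> att_strats (E j)"
  shows "restrict_attack E i (glue_attacks I E A) = A i"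
  using assms class_unique
  by (fastforce simp: restrict_attack_def glue_attacks_def att_strats_def)

lemma glue_attacks_in_att_strats: "glue_attacks I E A \<in> att_strats (devices I E)"
  by (auto simp: glue_attacks_def att_strats_def devices_def)

lemma UD_le_sum_class_optima:
  assumes p': "p' \<in> def_strats (devices I E) M" and a': "a' \<in> best_resp g I E CAE M p'"
    and A_max: "\<forall>i\<in>I. \<forall>q\<in>def_strats (E i) M. \<forall>b\<in>best_resp g {i} E CAE M q.
                  UD g {i} E M q b \<le> UD g {i} E M (ps i) (A i)"
  shows "UD g I E M p' a' \<le> (\<Sum>i\<in>I. UD g {i} E M (ps i) (A i))"
  unfolding UD_eq_sum_classes
proof (rule sum_mono)
  fix i assume i: "i \<in> I"
  let ?q = "restrict_strategy E i M p'" and ?b = "restrict_attack E i a'"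
  have agree: "\<forall>\<delta>\<in>E i. \<forall>m\<in>M. ?q \<delta> m = p' \<delta> m"
    by (simp add: restrict_strategy_def)
  have "?b \<in> best_resp g {i} E CAE M ?q"
    using a' i best_resp_class_cong[of E i M ?q p', OF agree] by (simp add: best_resp_iff_classwise)
  then have "UD g {i} E M ?q ?b \<le> UD g {i} E M (ps i) (A i)"
    using A_max i restrict_strategy_in_def_strats[OF p' i] by blast
  moreover have "UD g {i} E M p' a' = UD g {i} E M ?q ?b"
    by (rule UD_class_cong) (auto simp: restrict_strategy_def restrict_attack_def)
  ultimately show "UD g {i} E M p' a' \<le> UD g {i} E M (ps i) (A i)" by simp
qed

theorem optimal_combine:
  assumes opt: "\<forall>i\<in>I. optimal g {i} E CAE M (ps i)"
  shows "optimal g I E CAE M (combine I E M ps)"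
proof -
  let ?p = "combine I E M ps"
  have "\<forall>i\<in>I. \<exists>b. b \<in> best_resp g {i} E CAE M (ps i) \<and> (\<forall>q\<in>def_strats (E i) M.
          \<forall>b'\<in>best_resp g {i} E CAE M q. UD g {i} E M q b' \<le> UD g {i} E M (ps i) b)"
    using opt by (simp add: optimal_def Bex_def)
  then obtain A where A: "\<forall>i\<in>I. A i \<in> best_resp g {i} E CAE M (ps i) \<and>
      (\<forall>q\<in>def_strats (E i) M. \<forall>b\<in>best_resp g {i} E CAE M q.
         UD g {i} E M q b \<le> UD g {i} E M (ps i) (A i))"
    by metis
  then have A_br: "\<forall>i\<in>I. A i \<in> best_resp g {i} E CAE M (ps i)"
    and A_max: "\<forall>i\<in>I. \<forall>q\<in>def_strats (E i) M. \<forall>b\<in>best_resp g {i} E CAE M q.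
                  UD g {i} E M q b \<le> UD g {i} E M (ps i) (A i)"
    by blast+
  let ?a = "glue_attacks I E A"
  have A_att: "\<forall>i\<in>I. A i \<in> att_strats (E i)"
    using A_br best_resp_subset_att_strats[of g "{_}" E CAE M, unfolded devices_singleton] by blast
  have p_agree: "\<forall>\<delta>\<in>E i. \<forall>m\<in>M. ?p \<delta> m = ps i \<delta> m" if "i \<in> I" for i
    using that by (simp add: combine_eq_on_class)
  have a_agree: "\<forall>\<delta>\<in>E i. ?a \<delta> = A i \<delta>" if "i \<in> I" for i
    using restrict_glue_attacks[OF that A_att] by (auto simp: restrict_attack_def fun_eq_iff)
  have p_strat: "?p \<in> def_strats (devices I E) M"
    using opt by (simp add: optimal_def combine_in_def_strats)
  have a_br: "?a \<in> best_resp g I E CAE M ?p"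
  proof -
    have "restrict_attack E i ?a \<in> best_resp g {i} E CAE M ?p" if "i \<in> I" for i
      using A_br that best_resp_class_cong[of E i M ?p "ps i", OF p_agree[OF that]]
      by (simp add: restrict_glue_attacks[OF that A_att])
    then show ?thesis
      by (simp add: best_resp_iff_classwise glue_attacks_in_att_strats)
  qed
  have "UD g I E M ?p ?a = (\<Sum>i\<in>I. UD g {i} E M (ps i) (A i))"
    unfolding UD_eq_sum_classes
    by (intro sum.cong refl UD_class_cong p_agree a_agree)
  then have "UD g I E M p' a' \<le> UD g I E M ?p ?a"
    if "p' \<in> def_strats (devices I E) M" "a' \<in> best_resp g I E CAE M p'" for p' a'
    using UD_le_sum_class_optima[OF that A_max] by simp
  then show ?thesis
    using p_strat a_br unfolding optimal_def by blast
qed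

end

theorem proposition3:
  fixes g :: "('d,'m) ra_params" and E :: "nat \<Rightarrow> 'd set" and CAE :: "nat \<Rightarrow> real"
    and n :: nat and m :: 'm and M :: "'m set" and ps :: "nat \<Rightarrow> 'd \<Rightarrow> 'm \<Rightarrow> real"
  assumes fin: "finite (devices {1..n} E)"
    and disj: "\<forall>i\<in>{1..n}. \<forall>j\<in>{1..n}. i \<noteq> j \<longrightarrow> E i \<inter> E j = {}"
    and single: "M = {m}"
    and mu_prob: "0 \<le> mu g m \<and> mu g m \<le> 1"
    and losses: "\<forall>\<delta>\<in>devices {1..n} E. LD g \<delta> < 0 \<and> LA g \<delta> < 0"
    and zero_sum: "\<forall>\<delta>\<in>devices {1..n} E. GD g \<delta> = - LA g \<delta> \<and> LD g \<delta> = - GA g \<delta>"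
    and opt: "\<forall>i\<in>{1..n}. optimal g {i} E CAE M (ps i)"
  shows "optimal g {1..n} E CAE M (combine {1..n} E M ps)"
proof -
  interpret disjoint_classes "{1..n}" E
    using fin disj by unfold_locales simp_all
  show ?thesis
    using opt by (rule optimal_combine)
qed

end
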